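(* Let $F$, $H$, $X$, $\Omega$, $Q$ and the sequences generated by the IneIREG method be as described in the context. Let $\varepsilon>0$ be a tolerance and $\mathcal D_0>0$ satisfy $\mathcal D_0\ge \overline\lambda C_HD_X/\underline\lambda$, and suppose $\eta_k\equiv\eta:=\varepsilon/(2\mathcal D_0)$ for all $k\ge0$; $\alpha_0\in[0,1]$ and $(\alpha_k)$ is nonincreasing; $\lambda_k\in[\underline\lambda,\overline\lambda]$ for all $k$ with $0<\underline\lambda\le\overline\lambda\le1/(L_F+\eta L_H)$; and $\hat s:=\sum_{k=0}^\infty\delta_k<+\infty$. For $k\ge1$ let $\Lambda_k=\sum_{j=0}^{k-1}\lambda_j$ and $\overline y_k=\Lambda_k^{-1}\sum_{j=0}^{k-1}\lambda_jy_j$. Then for all $$k\ge\max\Big\{\Big\lceil\frac{1}{\varepsilon^2}\Big(\frac{\mathcal D_0(D_X^2+\hat s)}{\underline\lambda}\Big)\Big\rceil,\ \Big\lceil\frac1\varepsilon\Big(\frac{D_X^2+\hat s}{\underline\lambda}\Big)\Big\rceil\Big\}$$ we have $-B_H\,\mathrm{dist}(\overline y_k,Q)\le\mathrm{Gap}(\overline y_k,H,Q)\le\varepsilon$ and $0\le\mathrm{Gap}(\overline y_k,F,X)\le\varepsilon$. Moreover, if $Q$ is $\sigma$-weakly sharp of order $\mathcal M\ge1$, then for such $k$, $\mathrm{Gap}(\overline y_k,H,Q)\ge-\big(B_H/\sigma^{1/\mathcal M}\big)\varepsilon^{1/\mathcal M}$.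
   Context: Work in $\mathbb{R}^n$ with Euclidean inner product $\langle\cdot,\cdot\rangle$ and norm $\|\cdot\|$. The maps $F\colon \mathrm{Dom}\,F\to\mathbb{R}^n$ and $H\colon\mathrm{Dom}\,H\to\mathbb{R}^n$ are monotone and Lipschitz continuous with constants $L_F>0$ and $L_H>0$. $X$ is a nonempty compact convex set and $\Omega$ a nonempty closed convex set with $X\subset\Omega\subset\mathrm{Dom}\,F\cap\mathrm{Dom}\,H$; $P_X,P_\Omega$ denote orthogonal projections. $Q:=\{x\in X:\langle F(x),y-x\rangle\ge0\ \forall y\in X\}$ is assumed nonempty. $D_X:=\sup_{x,y\in X}\|x-y\|$, $C_H:=\sup_{x\in X}\|H(x)\|$, $B_H:=\sup_{x\in Q}\|H(x)\|$, $\mathrm{dist}(y,Q)$ is the Euclidean distance to $Q$. $\mathrm{Gap}(z,H,Q):=\sup_{x\in Q}\langle H(x),z-x\rangle$, $\mathrm{Gap}(z,F,X):=\sup_{x\in X}\langle F(x),z-x\rangle$. $Q$ is $\sigma$-weakly sharp of order $\mathcal M\ge1$ ($\sigma>0$) if $\langle F(x),y-x\rangle\ge\sigma\,\mathrm{dist}(y,Q)^{\mathcal M}$ for all $x\in Q$, $y\in X$. IneIREG method: start with $x_0=x_{-1}\in X$; for $k=0,1,\dots$, with parameters $\alpha_k\ge0$, $\lambda_k>0$, $\eta_k>0$, set $w_k=x_k+\alpha_k(x_k-x_{k-1})$, $w'_k=P_\Omega(w_k)$, $y_k=P_X\big(w_k-\lambda_k(F(w'_k)+\eta_kH(w'_k))\big)$,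 $x_{k+1}=P_X\big(w_k-\lambda_k(F(y_k)+\eta_kH(y_k))\big)$. Also $\delta_k:=\alpha_k(1+\alpha_k)\|x_k-x_{k-1}\|^2$ for $k\ge0$. *)

theory Defs
  imports "HOL-Analysis.Analysis"
begin

definition monotone_op :: "('a::real_inner \<Rightarrow> 'a) \<Rightarrow> 'a set \<Rightarrow> bool" where
  "monotone_op F D \<longleftrightarrow> (\<forall>x\<in>D. \<forall>y\<in>D. (F x - F y) \<bullet> (x - y) \<ge> 0)"

definition VI_sol :: "('a::real_inner \<Rightarrow> 'a) \<Rightarrow> 'a set \<Rightarrow> 'a set" where
  "VI_sol F X = {x \<in> X. \<forall>y\<in>X. F x \<bullet> (y - x) \<ge> 0}"

definition Gap :: "'a::real_inner \<Rightarrow> ('a \<Rightarrow> 'a) \<Rightarrow> 'a set \<Rightarrow> real" where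
  "Gap z G S = (SUP x\<in>S. G x \<bullet> (z - x))"

definition weakly_sharp :: "('a::real_inner \<Rightarrow> 'a) \<Rightarrow> 'a set \<Rightarrow> 'a set \<Rightarrow> real \<Rightarrow> real \<Rightarrow> bool" where
  "weakly_sharp F X Q \<sigma> M \<longleftrightarrow>
     (\<forall>x\<in>Q. \<forall>y\<in>X. F x \<bullet> (y - x) \<ge> \<sigma> * (infdist y Q) powr M)"

end

theory Submission
  imports Defs
begin

text \<open>
  The operator \<open>G = F + \<eta> H\<close> is monotone and \<open>(L\<^sub>F + \<eta> L\<^sub>H)\<close>-Lipschitz, so for \<open>u \<in> X\<close> every
  step satisfies \<open>\<parallel>x\<^sub>k\<^sub>+\<^sub>1 - u\<parallel>\<^sup>2 \<le> (1 + \<alpha>\<^sub>k) \<parallel>x\<^sub>k - u\<parallel>\<^sup>2 - \<alpha>\<^sub>k \<parallel>x\<^sub>k\<^sub>-\<^sub>1 - u\<parallel>\<^sup>2 + \<delta>\<^sub>k - 2 \<lambda>\<^sub>k \<langle>G y\<^sub>k, y\<^sub>k - u\<rangle>\<close>.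
  Telescoping, with the nonincreasing inertia absorbed by \<open>D\<^sub>X\<^sup>2\<close>, and monotonicity of \<open>G\<close> give
  \<open>\<langle>G u, ybar\<^sub>k - u\<rangle> \<le> (D\<^sub>X\<^sup>2 + \<Sum>\<delta>) / (2 k \<lambda>\<^sub>l\<^sub>o)\<close>, which the choice of \<open>k\<close> makes at most \<open>\<epsilon>/2\<close> and
  \<open>\<eta> \<epsilon>\<close>. For \<open>u \<in> X\<close> the \<open>H\<close>-part of \<open>G\<close> costs at most \<open>\<eta> C\<^sub>H D\<^sub>X \<le> \<epsilon>/2\<close>, which bounds the gap
  of \<open>F\<close>; for \<open>u \<in> Q\<close> the \<open>F\<close>-part is nonnegative, which bounds the gap of \<open>H\<close>. The lower
  bounds come from Cauchy-Schwarz at the point of \<open>Q\<close> nearest to \<open>ybar\<^sub>k\<close>, and weak sharpness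
  turns the bound on the gap of \<open>F\<close> into \<open>dist(ybar\<^sub>k, Q) \<le> (\<epsilon>/\<sigma>)\<^bsup>1/M\<^esup>\<close>.
\<close>

lemma monotone_op_add_scaleR:
  assumes "monotone_op F D" "monotone_op H D" "0 \<le> \<eta>"
  shows "monotone_op (\<lambda>z. F z + \<eta> *\<^sub>R H z) D"
  unfolding monotone_op_def
proof (intro ballI)
  fix u v assume "u \<in> D" "v \<in> D"
  then have "0 \<le> (F u - F v) \<bullet> (u - v)" "0 \<le> (H u - H v) \<bullet> (u - v)"
    using assms(1,2) unfolding monotone_op_def by auto
  moreover have "(F u + \<eta> *\<^sub>R H u - (F v + \<eta> *\<^sub>R H v)) \<bullet> (u - v)
      = (F u - F v) \<bullet> (u - v) + \<eta> * ((H u - H v) \<bullet> (u - v))"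
    by (simp add: inner_diff_left inner_add_left algebra_simps)
  ultimately show "0 \<le> (F u + \<eta> *\<^sub>R H u - (F v + \<eta> *\<^sub>R H v)) \<bullet> (u - v)"
    using assms(3) by simp
qed

lemma monotone_op_subset: "monotone_op F D \<Longrightarrow> E \<subseteq> D \<Longrightarrow> monotone_op F E"
  unfolding monotone_op_def by blast

lemma monotone_op_inner_le:
  assumes "monotone_op G D" "u \<in> D" "v \<in> D"
  shows "G u \<bullet> (v - u) \<le> G v \<bullet> (v - u)"
proof -
  have "0 \<le> (G v - G u) \<bullet> (v - u)"
    using assms unfolding monotone_op_def by blast
  then show ?thesis
    by (simp add: inner_diff_left)
qed

lemma VI_sol_subset: "VI_sol F X \<subseteq> X"
  unfolding VI_sol_def by auto

lemma VI_sol_inner_nonneg: "q \<in> VI_sol F X \<Longrightarrow> z \<in> X \<Longrightarrow> 0 \<le> F q \<bullet> (z - q)"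
  unfolding VI_sol_def by auto

lemma closed_VI_sol:
  assumes "continuous_on X F" "closed X"
  shows "closed (VI_sol F X)"
proof -
  have "VI_sol F X = X \<inter> (\<Inter>v\<in>X. {z \<in> X. 0 \<le> F z \<bullet> (v - z)})"
    unfolding VI_sol_def by auto
  moreover have "closed {z \<in> X. 0 \<le> F z \<bullet> (v - z)}" for v
    using assms by (intro continuous_on_closed_Collect_le continuous_intros)
  ultimately show ?thesis
    using assms(2) by (auto intro!: closed_Int closed_INT)
qed

lemma norm_le_SUP_norm:
  assumes "compact K" "continuous_on K H" "S \<subseteq> K" "z \<in> S"
  shows "norm (H z) \<le> (SUP z\<in>S. norm (H z))"
proof (rule cSUP_upper[OF assms(4)])
  have "bounded (H ` K)"
    using assms(1,2) by (simp add: compact_continuous_image compact_imp_bounded)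
  then show "bdd_above ((\<lambda>z. norm (H z)) ` S)"
    using assms(3) unfolding bounded_iff bdd_above_def by blast
qed

lemma extragradient_descent_of_projections:
  fixes w y x' u g g' :: "'a::real_inner"
  assumes "(w - lam *\<^sub>R g - x') \<bullet> (u - x') \<le> 0"
    and "(w - lam *\<^sub>R g' - y) \<bullet> (x' - y) \<le> 0"
    and "2 * lam * ((g' - g) \<bullet> (x' - y)) \<le> (norm (w - y))\<^sup>2 + (norm (x' - y))\<^sup>2"
  shows "(norm (x' - u))\<^sup>2 \<le> (norm (w - u))\<^sup>2 - 2 * lam * (g \<bullet> (y - u))"
  using assms
  by (simp add: power2_norm_eq_inner inner_diff_left inner_diff_right inner_commute algebra_simps)

lemma extragradient_step:
  fixes G :: "'a::euclidean_space \<Rightarrow> 'a"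
  assumes X: "closed X" "convex X" "X \<noteq> {}" and \<Omega>: "closed \<Omega>" "convex \<Omega>" "X \<subseteq> \<Omega>"
    and G_lip: "L-lipschitz_on \<Omega> G" and lam: "0 < lam" "lam * L \<le> 1" and u: "u \<in> X"
    and y: "y = closest_point X (w - lam *\<^sub>R G (closest_point \<Omega> w))"
    and x': "x' = closest_point X (w - lam *\<^sub>R G y)"
  shows "(norm (x' - u))\<^sup>2 \<le> (norm (w - u))\<^sup>2 - 2 * lam * (G y \<bullet> (y - u))"
proof -
  define w' where "w' = closest_point \<Omega> w"
  have "\<Omega> \<noteq> {}"
    using X(3) \<Omega>(3) by auto
  then have w'_in: "w' \<in> \<Omega>"
    unfolding w'_def using \<Omega>(1) closest_point_in_set by blast
  have y_in: "y \<in> X" and x'_in: "x' \<in> X"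
    unfolding y x' using X(1,3) by (auto intro: closest_point_in_set)
  have proj_x': "(w - lam *\<^sub>R G y - x') \<bullet> (u - x') \<le> 0"
    unfolding x' using X(2,1) u by (rule closest_point_dot)
  have proj_y: "(w - lam *\<^sub>R G w' - y) \<bullet> (x' - y) \<le> 0"
    unfolding y w'_def using X(2,1) x'_in y by (simp add: closest_point_dot)
  \<comment> \<open>\<open>P\<^sub>\<Omega>\<close> is nonexpansive and fixes \<open>y \<in> \<Omega>\<close>, so evaluating \<open>G\<close> at \<open>w'\<close>
    instead of \<open>w\<close> costs nothing.\<close>
  have "norm (w' - y) \<le> norm (w - y)"
    using closest_point_lipschitz[OF \<Omega>(2,1) \<open>\<Omega> \<noteq> {}\<close>, of w y] closest_point_self[of y \<Omega>]
      y_in \<Omega>(3) by (auto simp: w'_def dist_norm)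
  then have G_diff: "norm (G w' - G y) \<le> L * norm (w - y)"
    using lipschitz_on_normD[OF G_lip w'_in] y_in \<Omega>(3) lipschitz_on_nonneg[OF G_lip]
    by (meson mult_left_mono order_trans subsetD)
  have "2 * lam * ((G w' - G y) \<bullet> (x' - y)) \<le> 2 * lam * (norm (G w' - G y) * norm (x' - y))"
    using lam(1) norm_cauchy_schwarz[of "G w' - G y" "x' - y"] by (intro mult_left_mono) auto
  also have "\<dots> \<le> 2 * lam * (L * norm (w - y) * norm (x' - y))"
    using lam(1) G_diff by (intro mult_left_mono mult_right_mono) auto
  also have "\<dots> = 2 * (lam * L) * (norm (w - y) * norm (x' - y))"
    by simp
  also have "\<dots> \<le> 2 * (norm (w - y) * norm (x' - y))"
    using mult_right_mono[OF lam(2), of "norm (w - y) * norm (x' - y)"] by simp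
  also have "\<dots> \<le> (norm (w - y))\<^sup>2 + (norm (x' - y))\<^sup>2"
    using sum_squares_bound[of "norm (w - y)" "norm (x' - y)"] by (simp add: power2_eq_square)
  finally show ?thesis
    by (rule extragradient_descent_of_projections[OF proj_x' proj_y])
qed

lemma norm_extrapolation_sq:
  fixes a b u :: "'a::real_inner"
  shows "(norm (a + t *\<^sub>R (a - b) - u))\<^sup>2
    = (1 + t) * (norm (a - u))\<^sup>2 - t * (norm (b - u))\<^sup>2 + t * (1 + t) * (norm (a - b))\<^sup>2"
  by (simp add: power2_norm_eq_inner inner_diff_left inner_diff_right inner_add_left
      inner_add_right inner_commute algebra_simps)

lemma inertial_telescoping:
  fixes \<phi> \<alpha> \<delta> c :: "nat \<Rightarrow> real"
  assumes step: "\<And>k. \<phi> (Suc k) \<le> (1 + \<alpha> k) * \<phi> k - \<alpha> k * \<phi> (k - 1) + \<delta> k - c k"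
    and \<alpha>: "decseq \<alpha>" "\<And>k. 0 \<le> \<alpha> k" "\<alpha> 0 \<le> 1" and \<phi>: "\<And>k. 0 \<le> \<phi> k" "\<And>k. \<phi> k \<le> D"
  shows "(\<Sum>j<K. c j) \<le> D + (\<Sum>j<K. \<delta> j)"
proof -
  \<comment> \<open>The decrease of \<open>\<alpha>\<close> is paid for by the bound \<open>\<phi> \<le> D\<close>.\<close>
  have invariant: "\<phi> K - \<alpha> K * \<phi> (K - 1) + (\<Sum>j<K. c j)
      \<le> (1 - \<alpha> 0) * \<phi> 0 + (\<alpha> 0 - \<alpha> K) * D + (\<Sum>j<K. \<delta> j)" for K
  proof (induction K)
    case 0
    then show ?case by (simp add: algebra_simps)
  next
    case (Suc K)
    have "(\<alpha> K - \<alpha> (Suc K)) * \<phi> K \<le> (\<alpha> K - \<alpha> (Suc K)) * D"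
      using \<alpha>(1) \<phi>(2) by (intro mult_left_mono) (auto simp: decseq_Suc_iff)
    then show ?case
      using Suc step[of K] by (simp add: algebra_simps)
  qed
  have "(1 - \<alpha> 0) * \<phi> 0 \<le> (1 - \<alpha> 0) * D" "\<alpha> K * \<phi> (K - 1) \<le> \<alpha> K * D"
    using \<alpha>(2,3) \<phi>(2) by (auto intro: mult_left_mono)
  then show ?thesis
    using invariant[of K] \<phi>(1)[of K] by (simp add: algebra_simps)
qed

definition ergodic_mean :: "(nat \<Rightarrow> real) \<Rightarrow> (nat \<Rightarrow> 'a::real_vector) \<Rightarrow> nat \<Rightarrow> 'a" where
  "ergodic_mean lam y k = (1 / (\<Sum>j<k. lam j)) *\<^sub>R (\<Sum>j<k. lam j *\<^sub>R y j)"

lemma ergodic_mean_in_convex: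
  assumes "convex X" "\<And>j. y j \<in> X" "\<And>j. 0 < lam j" "0 < K"
  shows "ergodic_mean lam y K \<in> X"
proof -
  have pos: "0 < (\<Sum>j<K. lam j)"
    using assms(3,4) by (intro sum_pos) auto
  have "ergodic_mean lam y K = (\<Sum>j<K. (lam j / (\<Sum>i<K. lam i)) *\<^sub>R y j)"
    unfolding ergodic_mean_def by (simp add: scaleR_sum_right)
  also have "\<dots> \<in> X"
    using assms(1,2,3) pos by (intro convex_sum) (auto simp: less_imp_le simp flip: sum_divide_distrib)
  finally show ?thesis .
qed

lemma inner_ergodic_mean:
  fixes y :: "nat \<Rightarrow> 'a::real_inner"
  assumes "(\<Sum>j<K. lam j) \<noteq> 0"
  shows "(\<Sum>j<K. lam j * (g \<bullet> (y j - u))) = (\<Sum>j<K. lam j) * (g \<bullet> (ergodic_mean lam y K - u))"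
proof -
  have "(\<Sum>j<K. lam j) * (g \<bullet> ergodic_mean lam y K) = (\<Sum>j<K. lam j * (g \<bullet> y j))"
    using assms by (simp add: ergodic_mean_def inner_sum_right)
  then show ?thesis
    by (simp add: inner_diff_right right_diff_distrib sum_subtractf sum_distrib_right)
qed

text \<open>
  Truncated subtraction gives \<open>x (0 - 1) = x 0\<close>, which encodes \<open>x\<^sub>-\<^sub>1 = x\<^sub>0\<close>.
\<close>

locale inertial_extragradient =
  fixes X \<Omega> :: "'a::euclidean_space set" and G :: "'a \<Rightarrow> 'a" and L :: real
    and \<alpha> lam \<delta> :: "nat \<Rightarrow> real" and x y w :: "nat \<Rightarrow> 'a"
  assumes X_compact: "compact X" and X_convex: "convex X" and X_ne: "X \<noteq> {}"
    and \<Omega>_closed: "closed \<Omega>" and \<Omega>_convex: "convex \<Omega>" and X_sub: "X \<subseteq> \<Omega>"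
    and G_mono: "monotone_op G X" and G_lip: "L-lipschitz_on \<Omega> G"
    and lam_pos: "\<And>k. 0 < lam k" and lam_L: "\<And>k. lam k * L \<le> 1"
    and \<alpha>_nonneg: "\<And>k. 0 \<le> \<alpha> k" and \<alpha>0_le: "\<alpha> 0 \<le> 1" and \<alpha>_decseq: "decseq \<alpha>"
    and x0: "x 0 \<in> X"
    and w_eq: "\<And>k. w k = x k + \<alpha> k *\<^sub>R (x k - x (k - 1))"
    and y_eq: "\<And>k. y k = closest_point X (w k - lam k *\<^sub>R G (closest_point \<Omega> (w k)))"
    and x_Suc: "\<And>k. x (Suc k) = closest_point X (w k - lam k *\<^sub>R G (y k))"
    and \<delta>_eq: "\<And>k. \<delta> k = \<alpha> k * (1 + \<alpha> k) * (norm (x k - x (k - 1)))\<^sup>2"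
    and \<delta>_summable: "summable \<delta>"
begin

lemma X_closed: "closed X"
  using X_compact by (rule compact_imp_closed)

lemma x_in: "x k \<in> X"
  by (cases k) (auto simp: x0 x_Suc intro: closest_point_in_set[OF X_closed X_ne])

lemma y_in: "y k \<in> X"
  unfolding y_eq by (rule closest_point_in_set[OF X_closed X_ne])

lemma norm_diff_le_diameter: "a \<in> X \<Longrightarrow> b \<in> X \<Longrightarrow> norm (a - b) \<le> diameter X"
  using diameter_bounded_bound[OF compact_imp_bounded[OF X_compact]] by (simp add: dist_norm)

lemma distance_step:
  assumes "u \<in> X"
  shows "(norm (x (Suc k) - u))\<^sup>2
    \<le> (1 + \<alpha> k) * (norm (x k - u))\<^sup>2 - \<alpha> k * (norm (x (k - 1) - u))\<^sup>2 + \<delta> k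
       - 2 * lam k * (G (y k) \<bullet> (y k - u))"
  using extragradient_step[OF X_closed X_convex X_ne \<Omega>_closed \<Omega>_convex X_sub G_lip lam_pos
      lam_L assms y_eq x_Suc]
  by (simp add: w_eq \<delta>_eq norm_extrapolation_sq)

lemma weighted_sum_bound:
  assumes "u \<in> X"
  shows "2 * (\<Sum>j<K. lam j * (G (y j) \<bullet> (y j - u))) \<le> (diameter X)\<^sup>2 + suminf \<delta>"
proof -
  have \<delta>_nonneg: "0 \<le> \<delta> k" for k
    using \<alpha>_nonneg by (simp add: \<delta>_eq)
  have "(norm (x k - u))\<^sup>2 \<le> (diameter X)\<^sup>2" for k
    using norm_diff_le_diameter[OF x_in assms] by (intro power_mono) auto
  then have "(\<Sum>j<K. 2 * lam j * (G (y j) \<bullet> (y j - u))) \<le> (diameter X)\<^sup>2 + (\<Sum>j<K. \<delta> j)"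
    using inertial_telescoping[where \<phi> = "\<lambda>j. (norm (x j - u))\<^sup>2"
        and c = "\<lambda>j. 2 * lam j * (G (y j) \<bullet> (y j - u))",
        OF distance_step[OF assms] \<alpha>_decseq \<alpha>_nonneg \<alpha>0_le]
    by simp
  also have "(\<Sum>j<K. \<delta> j) \<le> suminf \<delta>"
    using \<delta>_summable \<delta>_nonneg by (intro sum_le_suminf) auto
  finally show ?thesis
    by (simp add: sum_distrib_left mult.assoc)
qed

lemma ergodic_rate:
  assumes "0 < K" "0 < lam_lo" "\<And>k. lam_lo \<le> lam k" "u \<in> X"
  shows "G u \<bullet> (ergodic_mean lam y K - u)
    \<le> ((diameter X)\<^sup>2 + suminf \<delta>) / (2 * (real K * lam_lo))"
proof -
  define \<Lambda> where "\<Lambda> = (\<Sum>j<K. lam j)"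
  define S where "S = (diameter X)\<^sup>2 + suminf \<delta>"
  have K_lam_lo: "0 < real K * lam_lo" "real K * lam_lo \<le> \<Lambda>"
    using assms(1-3) sum_mono[of "{..<K}" "\<lambda>_. lam_lo" lam] by (auto simp: \<Lambda>_def)
  have "\<Lambda> * (G u \<bullet> (ergodic_mean lam y K - u)) = (\<Sum>j<K. lam j * (G u \<bullet> (y j - u)))"
    using K_lam_lo by (simp add: \<Lambda>_def inner_ergodic_mean)
  also have "\<dots> \<le> (\<Sum>j<K. lam j * (G (y j) \<bullet> (y j - u)))"
    using monotone_op_inner_le[OF G_mono assms(4) y_in] lam_pos
    by (intro sum_mono mult_left_mono) (auto simp: less_imp_le)
  also have "\<dots> \<le> S / 2"
    using weighted_sum_bound[OF assms(4), of K] by (simp add: S_def field_simps)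
  finally have "G u \<bullet> (ergodic_mean lam y K - u) \<le> S / 2 / \<Lambda>"
    using K_lam_lo by (simp add: pos_le_divide_eq mult.commute)
  also have "\<dots> \<le> S / 2 / (real K * lam_lo)"
    using K_lam_lo weighted_sum_bound[OF assms(4), of 0] \<comment> \<open>the empty sum gives \<open>0 \<le> S\<close>\<close>
    by (intro divide_left_mono) (auto simp: S_def)
  finally show ?thesis
    by (simp add: S_def)
qed

end

lemma Gap_le:
  assumes "S \<noteq> {}" "\<And>x. x \<in> S \<Longrightarrow> G x \<bullet> (z - x) \<le> c"
  shows "Gap z G S \<le> c"
  unfolding Gap_def using assms by (intro cSUP_least) auto

lemma inner_le_Gap:
  assumes "x \<in> S" "\<And>x. x \<in> S \<Longrightarrow> G x \<bullet> (z - x) \<le> c"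
  shows "G x \<bullet> (z - x) \<le> Gap z G S"
  unfolding Gap_def using assms by (intro cSUP_upper bdd_aboveI2) auto

lemma Gap_nonneg:
  assumes "z \<in> S" "\<And>x. x \<in> S \<Longrightarrow> G x \<bullet> (z - x) \<le> c"
  shows "0 \<le> Gap z G S"
  using inner_le_Gap[OF assms] by simp

lemma Gap_ge_neg_infdist:
  fixes G :: "'a::{real_inner,heine_borel} \<Rightarrow> 'a"
  assumes "closed S" "S \<noteq> {}" "\<And>x. x \<in> S \<Longrightarrow> norm (G x) \<le> B"
    and "\<And>x. x \<in> S \<Longrightarrow> G x \<bullet> (z - x) \<le> c"
  shows "- B * infdist z S \<le> Gap z G S"
proof -
  obtain q where q: "q \<in> S" "infdist z S = norm (z - q)"
    using infdist_attains_inf[OF assms(1,2)] by (metis dist_norm)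
  have "- B * infdist z S \<le> - (norm (G q) * norm (z - q))"
    using q assms(3) by (simp add: mult_right_mono)
  also have "\<dots> \<le> G q \<bullet> (z - q)"
    using Cauchy_Schwarz_ineq2[of "G q" "z - q"] by linarith
  also have "\<dots> \<le> Gap z G S"
    using q(1) assms(4) by (rule inner_le_Gap)
  finally show ?thesis .
qed

lemma weakly_sharp_infdist_le:
  assumes "weakly_sharp F X Q \<sigma> M" "0 < \<sigma>" "0 < M" "q \<in> Q" "z \<in> X" "F q \<bullet> (z - q) \<le> \<epsilon>"
  shows "infdist z Q \<le> (\<epsilon> / \<sigma>) powr (1 / M)"
proof -
  have "\<sigma> * infdist z Q powr M \<le> \<epsilon>"
    using assms(1,4,5,6) unfolding weakly_sharp_def by force
  then have "infdist z Q powr M \<le> \<epsilon> / \<sigma>"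
    using assms(2) by (simp add: pos_le_divide_eq mult.commute)
  then have "(infdist z Q powr M) powr (1 / M) \<le> (\<epsilon> / \<sigma>) powr (1 / M)"
    using assms(3) by (intro powr_mono2) auto
  moreover have "(infdist z Q powr M) powr (1 / M) = infdist z Q"
    using assms(3) infdist_nonneg[of z Q]
    by (cases "infdist z Q = 0") (auto simp: powr_powr)
  ultimately show ?thesis by simp
qed

lemma weakly_sharp_Gap_lower_bound:
  assumes "weakly_sharp F X Q \<sigma> M" "0 < \<sigma>" "0 < M" "q \<in> Q" "z \<in> X" "F q \<bullet> (z - q) \<le> \<epsilon>"
    and "0 \<le> B" "- B * infdist z Q \<le> g"
  shows "- (B / \<sigma> powr (1 / M)) * \<epsilon> powr (1 / M) \<le> g"
proof -
  have "- B * (\<epsilon> / \<sigma>) powr (1 / M) \<le> - B * infdist z Q"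
    using weakly_sharp_infdist_le[OF assms(1-6)] assms(7) by (simp add: mult_left_mono)
  then show ?thesis
    using assms(8) by (simp add: powr_divide)
qed

lemma inner_le_of_regularized:
  assumes "(F u + \<eta> *\<^sub>R H u) \<bullet> (z - u) \<le> r" "norm (H u) \<le> C" "norm (z - u) \<le> D" "0 \<le> \<eta>"
  shows "F u \<bullet> (z - u) \<le> r + \<eta> * (C * D)"
proof -
  have "- (H u \<bullet> (z - u)) \<le> norm (H u) * norm (z - u)"
    using Cauchy_Schwarz_ineq2[of "H u" "z - u"] by linarith
  also have "\<dots> \<le> C * D"
    using assms(2,3) norm_ge_zero order_trans by (intro mult_mono) blast+
  finally have "- (H u \<bullet> (z - u)) \<le> C * D" .
  then show ?thesis
    using assms(1,4) mult_left_mono[of "- (H u \<bullet> (z - u))" "C * D" \<eta>] by (simp add: inner_add_left)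
qed

lemma inner_VI_sol_le_of_regularized:
  assumes "(F u + \<eta> *\<^sub>R H u) \<bullet> (z - u) \<le> r" "u \<in> VI_sol F X" "z \<in> X" "0 < \<eta>"
  shows "H u \<bullet> (z - u) \<le> r / \<eta>"
  using assms VI_sol_inner_nonneg[OF assms(2,3)]
  by (simp add: inner_add_left pos_le_divide_eq mult.commute)

lemma Gap_bounds_of_regularized_bound:
  fixes F H :: "'a::euclidean_space \<Rightarrow> 'a" and X :: "'a set"
  defines "Q \<equiv> VI_sol F X" and "B \<equiv> (SUP u\<in>VI_sol F X. norm (H u))"
  assumes X: "compact X" and F_cont: "continuous_on X F" and H_cont: "continuous_on X H"
    and Q_ne: "Q \<noteq> {}" and z: "z \<in> X" and \<eta>: "0 < \<eta>"
    and bound: "\<And>u. u \<in> X \<Longrightarrow> (F u + \<eta> *\<^sub>R H u) \<bullet> (z - u) \<le> r"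
    and r: "r \<le> \<epsilon> / 2" "r \<le> \<eta> * \<epsilon>"
    and H_part: "\<eta> * ((SUP u\<in>X. norm (H u)) * diameter X) \<le> \<epsilon> / 2"
  shows "- B * infdist z Q \<le> Gap z H Q \<and> Gap z H Q \<le> \<epsilon> \<and>
         0 \<le> Gap z F X \<and> Gap z F X \<le> \<epsilon> \<and>
         (\<forall>\<sigma> M. \<sigma> > 0 \<and> M \<ge> 1 \<and> weakly_sharp F X Q \<sigma> M \<longrightarrow>
            Gap z H Q \<ge> - (B / \<sigma> powr (1 / M)) * \<epsilon> powr (1 / M))"
proof -
  have Q_sub: "Q \<subseteq> X"
    unfolding Q_def by (rule VI_sol_subset)
  have F_le: "F u \<bullet> (z - u) \<le> \<epsilon>" if "u \<in> X" for u
  proof -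
    have "norm (z - u) \<le> diameter X"
      using diameter_bounded_bound[OF compact_imp_bounded[OF X] z that] by (simp add: dist_norm)
    then have "F u \<bullet> (z - u) \<le> r + \<eta> * ((SUP u\<in>X. norm (H u)) * diameter X)"
      using \<eta> by (intro inner_le_of_regularized[where H = H] bound that norm_le_SUP_norm[OF X H_cont]) auto
    then show ?thesis
      using r(1) H_part by linarith
  qed
  have H_le: "H u \<bullet> (z - u) \<le> \<epsilon>" if "u \<in> Q" for u
  proof -
    have "H u \<bullet> (z - u) \<le> r / \<eta>"
      using that Q_sub z \<eta> unfolding Q_def
      by (intro inner_VI_sol_le_of_regularized[where F = F] bound) auto
    also have "\<dots> \<le> \<epsilon>"
      using r(2) \<eta> by (simp add: pos_divide_le_eq mult.commute)
    finally show ?thesis .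
  qed
  have B_bound: "norm (H u) \<le> B" if "u \<in> Q" for u
    using that Q_sub unfolding B_def Q_def by (intro norm_le_SUP_norm[OF X H_cont])
  obtain q where q: "q \<in> Q"
    using Q_ne by blast
  have H_lower: "- B * infdist z Q \<le> Gap z H Q"
    using closed_VI_sol[OF F_cont compact_imp_closed[OF X]] Q_ne B_bound H_le
    by (intro Gap_ge_neg_infdist) (auto simp: Q_def)
  have B_nonneg: "0 \<le> B"
    using B_bound[OF q] norm_ge_zero order_trans by blast
  have "- (B / \<sigma> powr (1 / M)) * \<epsilon> powr (1 / M) \<le> Gap z H Q"
    if "0 < \<sigma>" "1 \<le> M" "weakly_sharp F X Q \<sigma> M" for \<sigma> M
    using that(2) q Q_sub
    by (intro weakly_sharp_Gap_lower_bound[OF that(3,1) _ q z F_le B_nonneg H_lower]) auto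
  then show ?thesis
    using H_lower Gap_le[OF Q_ne H_le] Gap_nonneg[OF z F_le] Gap_le[OF _ F_le] z by auto
qed

lemma iteration_count_bound:
  fixes S \<epsilon> D0 lam_lo :: real and K :: nat
  assumes "0 < \<epsilon>" "0 < D0" "0 < lam_lo" "1 \<le> K"
    and "max \<lceil>(1 / \<epsilon>\<^sup>2) * (D0 * S / lam_lo)\<rceil> \<lceil>(1 / \<epsilon>) * (S / lam_lo)\<rceil> \<le> int K"
  shows "S / (2 * (real K * lam_lo)) \<le> \<epsilon> / 2"
    and "S / (2 * (real K * lam_lo)) \<le> \<epsilon> / (2 * D0) * \<epsilon>"
proof -
  have pos: "0 < \<epsilon> * lam_lo" "0 < \<epsilon>\<^sup>2 * lam_lo" "0 < real K * lam_lo"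
    using assms(1,3,4) by simp_all
  have "(1 / \<epsilon>\<^sup>2) * (D0 * S / lam_lo) \<le> real K" "(1 / \<epsilon>) * (S / lam_lo) \<le> real K"
    using assms(5) by (simp_all add: ceiling_le_iff)
  then have "S \<le> real K * (\<epsilon> * lam_lo)" "D0 * S \<le> real K * (\<epsilon>\<^sup>2 * lam_lo)"
    using pos by (simp_all add: pos_divide_le_eq mult.commute)
  then show "S / (2 * (real K * lam_lo)) \<le> \<epsilon> / 2"
    and "S / (2 * (real K * lam_lo)) \<le> \<epsilon> / (2 * D0) * \<epsilon>"
    using pos(3) assms(2) by (simp_all add: field_simps power2_eq_square)
qed

lemma regularization_cost_le:
  fixes C D :: real
  assumes "0 \<le> C * D" "0 < lam_lo" "lam_lo \<le> lam_hi" "0 < D0" "0 \<le> \<epsilon>"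
    and "lam_hi * C * D / lam_lo \<le> D0"
  shows "\<epsilon> / (2 * D0) * (C * D) \<le> \<epsilon> / 2"
proof -
  have "C * D \<le> lam_hi * C * D / lam_lo"
    using mult_right_mono[OF assms(3,1)] assms(2)
    by (simp add: pos_le_divide_eq mult.commute mult.left_commute)
  then have "\<epsilon> / (2 * D0) * (C * D) \<le> \<epsilon> / (2 * D0) * D0"
    using assms(4-6) by (intro mult_left_mono) auto
  then show ?thesis
    using assms(4) by simp
qed

locale regularized_inertial_extragradient =
  fixes F H :: "'a::euclidean_space \<Rightarrow> 'a" and DomF DomH X \<Omega> :: "'a set"
    and L_F L_H \<eta> :: real and \<alpha> lam \<delta> :: "nat \<Rightarrow> real" and x y w :: "nat \<Rightarrow> 'a"
  assumes F_mono: "monotone_op F DomF" and H_mono: "monotone_op H DomH"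
    and F_lip: "L_F-lipschitz_on DomF F" and H_lip: "L_H-lipschitz_on DomH H"
    and L_F_pos: "0 < L_F" and L_H_pos: "0 < L_H" and \<eta>_pos: "0 < \<eta>"
    and X_compact: "compact X" and X_convex: "convex X" and X_ne: "X \<noteq> {}"
    and \<Omega>_closed: "closed \<Omega>" and \<Omega>_convex: "convex \<Omega>"
    and X_sub: "X \<subseteq> \<Omega>" and \<Omega>_sub: "\<Omega> \<subseteq> DomF \<inter> DomH"
    and lam_pos: "\<And>k. 0 < lam k" and lam_le: "\<And>k. lam k \<le> 1 / (L_F + \<eta> * L_H)"
    and \<alpha>_nonneg: "\<And>k. 0 \<le> \<alpha> k" and \<alpha>0_le: "\<alpha> 0 \<le> 1" and \<alpha>_decseq: "decseq \<alpha>"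
    and x0: "x 0 \<in> X"
    and w_eq: "\<And>k. w k = x k + \<alpha> k *\<^sub>R (x k - x (k - 1))"
    and y_eq: "\<And>k. y k = closest_point X (w k - lam k *\<^sub>R
                 (F (closest_point \<Omega> (w k)) + \<eta> *\<^sub>R H (closest_point \<Omega> (w k))))"
    and x_Suc: "\<And>k. x (Suc k) = closest_point X (w k - lam k *\<^sub>R (F (y k) + \<eta> *\<^sub>R H (y k)))"
    and \<delta>_eq: "\<And>k. \<delta> k = \<alpha> k * (1 + \<alpha> k) * (norm (x k - x (k - 1)))\<^sup>2"
    and \<delta>_summable: "summable \<delta>"
begin

lemma F_continuous: "continuous_on X F"
  using lipschitz_on_continuous_on[OF lipschitz_on_subset[OF F_lip]] X_sub \<Omega>_sub by auto

lemma H_continuous: "continuous_on X H"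
  using lipschitz_on_continuous_on[OF lipschitz_on_subset[OF H_lip]] X_sub \<Omega>_sub by auto

lemma SUP_norm_mult_diameter_nonneg: "0 \<le> (SUP u\<in>X. norm (H u)) * diameter X"
  using order_trans[OF norm_ge_zero norm_le_SUP_norm[OF X_compact H_continuous order_refl x0]]
    diameter_ge_0[OF compact_imp_bounded[OF X_compact]]
  by (rule mult_nonneg_nonneg)

lemma regularized_monotone: "monotone_op (\<lambda>z. F z + \<eta> *\<^sub>R H z) X"
  using X_sub \<Omega>_sub \<eta>_pos
  by (intro monotone_op_add_scaleR monotone_op_subset[OF F_mono] monotone_op_subset[OF H_mono])
    auto

lemma regularized_lipschitz: "(L_F + \<eta> * L_H)-lipschitz_on \<Omega> (\<lambda>z. F z + \<eta> *\<^sub>R H z)"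
  using \<Omega>_sub \<eta>_pos
  by (intro lipschitz_on_add lipschitz_on_cmult_nonneg lipschitz_on_subset[OF F_lip]
      lipschitz_on_subset[OF H_lip]) auto

lemma lam_mult_le_one: "lam k * (L_F + \<eta> * L_H) \<le> 1"
  using lam_le[of k] L_F_pos L_H_pos \<eta>_pos by (simp add: le_divide_eq add_pos_pos)

sublocale EG: inertial_extragradient X \<Omega> "\<lambda>z. F z + \<eta> *\<^sub>R H z" "L_F + \<eta> * L_H" \<alpha> lam \<delta> x y w
  using X_compact X_convex X_ne \<Omega>_closed \<Omega>_convex X_sub regularized_monotone
    regularized_lipschitz lam_pos lam_mult_le_one \<alpha>_nonneg \<alpha>0_le \<alpha>_decseq x0 w_eq y_eq x_Suc
    \<delta>_eq \<delta>_summable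
  by unfold_locales auto

lemma ergodic_mean_Gap_bounds:
  assumes "0 < K" "0 < lam_lo" "\<And>k. lam_lo \<le> lam k" "VI_sol F X \<noteq> {}"
    and "((diameter X)\<^sup>2 + suminf \<delta>) / (2 * (real K * lam_lo)) \<le> \<epsilon> / 2"
    and "((diameter X)\<^sup>2 + suminf \<delta>) / (2 * (real K * lam_lo)) \<le> \<eta> * \<epsilon>"
    and "\<eta> * ((SUP u\<in>X. norm (H u)) * diameter X) \<le> \<epsilon> / 2"
  defines "z \<equiv> ergodic_mean lam y K" and "Q \<equiv> VI_sol F X"
    and "B \<equiv> (SUP u\<in>VI_sol F X. norm (H u))"
  shows "- B * infdist z Q \<le> Gap z H Q \<and> Gap z H Q \<le> \<epsilon> \<and>
         0 \<le> Gap z F X \<and> Gap z F X \<le> \<epsilon> \<and>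
         (\<forall>\<sigma> M. \<sigma> > 0 \<and> M \<ge> 1 \<and> weakly_sharp F X Q \<sigma> M \<longrightarrow>
            Gap z H Q \<ge> - (B / \<sigma> powr (1 / M)) * \<epsilon> powr (1 / M))"
proof -
  have "(F u + \<eta> *\<^sub>R H u) \<bullet> (ergodic_mean lam y K - u)
      \<le> ((diameter X)\<^sup>2 + suminf \<delta>) / (2 * (real K * lam_lo))" if "u \<in> X" for u
    using EG.ergodic_rate[OF assms(1-3) that] by simp
  then show ?thesis
    unfolding z_def Q_def B_def
    by (rule Gap_bounds_of_regularized_bound[OF X_compact F_continuous H_continuous assms(4)
          ergodic_mean_in_convex[OF X_convex EG.y_in lam_pos assms(1)] \<eta>_pos _ assms(5-7)])
qed

end

theorem theorem3p13:
  fixes F H :: "real^'n \<Rightarrow> real^'n"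
    and DomF DomH X \<Omega> :: "(real^'n) set"
    and L_F L_H \<epsilon> D0 lam_lo lam_hi :: real
    and x y w w' :: "nat \<Rightarrow> real^'n"
    and \<alpha> lam :: "nat \<Rightarrow> real"
  defines "Q \<equiv> VI_sol F X"
    and "D_X \<equiv> diameter X"
    and "C_H \<equiv> (SUP z\<in>X. norm (H z))"
    and "B_H \<equiv> (SUP z\<in>VI_sol F X. norm (H z))"
    and "\<eta> \<equiv> \<epsilon> / (2 * D0)"
    and "\<delta> \<equiv> (\<lambda>k. \<alpha> k * (1 + \<alpha> k) * (norm (x k - x (k - 1)))\<^sup>2)"
    and "ybar \<equiv> (\<lambda>k. (1 / (\<Sum>j<k. lam j)) *\<^sub>R (\<Sum>j<k. lam j *\<^sub>R y j))"
  assumes F_mono: "monotone_op F DomF" and H_mono: "monotone_op H DomH"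
    and L_F_pos: "L_F > 0" and L_H_pos: "L_H > 0"
    and F_lip: "L_F-lipschitz_on DomF F" and H_lip: "L_H-lipschitz_on DomH H"
    and X_ne: "X \<noteq> {}" and X_compact: "compact X" and X_convex: "convex X"
    and \<Omega>_ne: "\<Omega> \<noteq> {}" and \<Omega>_closed: "closed \<Omega>" and \<Omega>_convex: "convex \<Omega>"
    and X_sub: "X \<subseteq> \<Omega>" and \<Omega>_sub: "\<Omega> \<subseteq> DomF \<inter> DomH"
    and Q_ne: "VI_sol F X \<noteq> {}"
    and eps_pos: "\<epsilon> > 0"
    and D0_pos: "D0 > 0" and D0_ge: "D0 \<ge> lam_hi * C_H * D_X / lam_lo"
    and alpha_nonneg: "\<And>k. \<alpha> k \<ge> 0" and alpha0: "\<alpha> 0 \<le> 1"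
    and alpha_noninc: "decseq \<alpha>"
    and lam_bounds: "\<And>k. lam_lo \<le> lam k \<and> lam k \<le> lam_hi"
    and lam_lo_pos: "0 < lam_lo" and lam_lo_hi: "lam_lo \<le> lam_hi"
    and lam_hi_le: "lam_hi \<le> 1 / (L_F + \<eta> * L_H)"
    and x0: "x 0 \<in> X"
    and w_def: "\<And>k. w k = x k + \<alpha> k *\<^sub>R (x k - x (k - 1))"
    and w'_def: "\<And>k. w' k = closest_point \<Omega> (w k)"
    and y_def: "\<And>k. y k = closest_point X (w k - lam k *\<^sub>R (F (w' k) + \<eta> *\<^sub>R H (w' k)))"
    and x_def: "\<And>k. x (Suc k) = closest_point X (w k - lam k *\<^sub>R (F (y k) + \<eta> *\<^sub>R H (y k)))"
    and delta_summable: "summable \<delta>"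
  shows "\<forall>k. k \<ge> 1 \<and>
           int k \<ge> max \<lceil>(1 / \<epsilon>\<^sup>2) * (D0 * (D_X\<^sup>2 + suminf \<delta>) / lam_lo)\<rceil>
                       \<lceil>(1 / \<epsilon>) * ((D_X\<^sup>2 + suminf \<delta>) / lam_lo)\<rceil> \<longrightarrow>
           (- B_H * infdist (ybar k) Q \<le> Gap (ybar k) H Q \<and> Gap (ybar k) H Q \<le> \<epsilon> \<and>
            0 \<le> Gap (ybar k) F X \<and> Gap (ybar k) F X \<le> \<epsilon> \<and>
            (\<forall>\<sigma> M. \<sigma> > 0 \<and> M \<ge> 1 \<and> weakly_sharp F X Q \<sigma> M \<longrightarrow>
               Gap (ybar k) H Q \<ge> - (B_H / \<sigma> powr (1 / M)) * \<epsilon> powr (1 / M)))"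
proof (intro allI impI)
  fix K :: nat
  assume K: "K \<ge> 1 \<and> int K \<ge> max \<lceil>(1 / \<epsilon>\<^sup>2) * (D0 * (D_X\<^sup>2 + suminf \<delta>) / lam_lo)\<rceil>
                       \<lceil>(1 / \<epsilon>) * ((D_X\<^sup>2 + suminf \<delta>) / lam_lo)\<rceil>"
  have \<eta>_pos: "0 < \<eta>"
    using eps_pos D0_pos by (simp add: \<eta>_def)
  have lam_le: "lam k \<le> 1 / (L_F + \<eta> * L_H)" for k
    using lam_bounds[of k] lam_hi_le by linarith
  interpret regularized_inertial_extragradient F H DomF DomH X \<Omega> L_F L_H \<eta> \<alpha> lam \<delta> x y w
    using assms \<eta>_pos lam_le by unfold_locales (auto simp: w'_def \<delta>_def intro: less_le_trans)
  have H_part: "\<eta> * (C_H * D_X) \<le> \<epsilon> / 2"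
    using SUP_norm_mult_diameter_nonneg lam_lo_pos lam_lo_hi D0_pos eps_pos D0_ge
    unfolding \<eta>_def C_H_def D_X_def by (intro regularization_cost_le) auto
  have rate: "(D_X\<^sup>2 + suminf \<delta>) / (2 * (real K * lam_lo)) \<le> \<epsilon> / 2"
    "(D_X\<^sup>2 + suminf \<delta>) / (2 * (real K * lam_lo)) \<le> \<eta> * \<epsilon>"
    using iteration_count_bound[OF eps_pos D0_pos lam_lo_pos, where K = K and S = "D_X\<^sup>2 + suminf \<delta>"] K
    by (simp_all add: \<eta>_def)
  have "ybar K = ergodic_mean lam y K"
    by (simp add: ybar_def ergodic_mean_def)
  moreover have "0 < K"
    using K by simp
  ultimately show "- B_H * infdist (ybar K) Q \<le> Gap (ybar K) H Q \<and> Gap (ybar K) H Q \<le> \<epsilon> \<and>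
      0 \<le> Gap (ybar K) F X \<and> Gap (ybar K) F X \<le> \<epsilon> \<and>
      (\<forall>\<sigma> M. \<sigma> > 0 \<and> M \<ge> 1 \<and> weakly_sharp F X Q \<sigma> M \<longrightarrow>
         Gap (ybar K) H Q \<ge> - (B_H / \<sigma> powr (1 / M)) * \<epsilon> powr (1 / M))"
    unfolding Q_def B_H_def
    using ergodic_mean_Gap_bounds[OF _ lam_lo_pos conjunct1[OF lam_bounds] Q_ne
        rate[unfolded D_X_def] H_part[unfolded C_H_def D_X_def]]
    by simp
qed

end
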